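(* Fix a slot $n$ and state $(\mathbf x(n),\mathbf g(n))$ of the model in the context, and let a policy $\pi\in\Pi$ choose the feasible withdrawal vector $\mathbf y(n)$. Let $f,t\in\{0,1,\dots,L\}$ be queues such that the interchange $\mathbf I(f,t)$ is feasible. If $\hat x_t(n)\le\hat x_f(n)-2$, then $\pi$ does not have the MB property at time $n$.
   Context: Model: real queues $1,\dots,L$, dummy queue $0$, $K$ identical servers. State: queue lengths $x_i(n)\in\mathbb Z_+$ ($x_0=0$), connectivities $g_{i,j}(n)\in\{0,1\}$ ($g_{0,j}=1$). A scheduling control $\mathbf q\in\{0,\dots,L\}^K$ (server $j$ serves $q_j$, $0$ = idle) is feasible if $g_{q_j,j}=1$ for all $j$ and each real queue $i$ gets at most $x_i$ servers; withdrawal vector $y_i=\#\{j:q_j=i\}$; feasible withdrawal vectors arise from feasible controls. Updated sizes $\hat x_i(n)=x_i(n)-y_i(n)$. Imbalance index $\kappa_n=\sum_{i=1}^{L}\sum_{j=i+1}^{L+1}(\hat x_{[i]}(n)-\hat x_{[j]}(n))$ with $[1],\dots,[L]$ ordering the real queues by non-increasing $\hat x$, $[L+1]=0$. $\pi$ has the MB property at time $n$ if $\mathbf y(n)$ minimizes $\kappa_n$ over all feasible withdrawal vectors. Interchange $\mathbf I(f,t)$ ($f\ne t$): $+1$ at $f$, $-1$ at $t$, $0$ elsewhere; feasible if $\mathbf y(n)+\mathbf I(f,t)$ is a feasible withdrawal vector. *)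

theory Defs
  imports Main
begin

text \<open>Queues are indexed by 0..L (0 = dummy queue), servers by 0..K-1.
  Queue lengths x :: nat => nat, connectivities g :: nat => nat => bool
  (g i j: queue i connected to server j). A control q maps server j to queue q j.\<close>

definition feasible_control :: "nat \<Rightarrow> nat \<Rightarrow> (nat \<Rightarrow> nat) \<Rightarrow> (nat \<Rightarrow> nat \<Rightarrow> bool) \<Rightarrow> (nat \<Rightarrow> nat) \<Rightarrow> bool" where
  "feasible_control L K x g q \<longleftrightarrow>
     (\<forall>j<K. q j \<le> L \<and> g (q j) j) \<and>
     (\<forall>i\<in>{1..L}. card {j. j < K \<and> q j = i} \<le> x i)"

definition withdrawal :: "nat \<Rightarrow> (nat \<Rightarrow> nat) \<Rightarrow> nat \<Rightarrow> nat" where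
  "withdrawal K q i = card {j. j < K \<and> q j = i}"

definition feasible_withdrawal :: "nat \<Rightarrow> nat \<Rightarrow> (nat \<Rightarrow> nat) \<Rightarrow> (nat \<Rightarrow> nat \<Rightarrow> bool) \<Rightarrow> (nat \<Rightarrow> int) \<Rightarrow> bool" where
  "feasible_withdrawal L K x g y \<longleftrightarrow>
     (\<exists>q. feasible_control L K x g q \<and> (\<forall>i\<le>L. y i = int (withdrawal K q i)))"

definition updated :: "(nat \<Rightarrow> nat) \<Rightarrow> (nat \<Rightarrow> int) \<Rightarrow> nat \<Rightarrow> int" where
  "updated x y i = int (x i) - y i"

definition sorted_order :: "nat \<Rightarrow> (nat \<Rightarrow> int) \<Rightarrow> (nat \<Rightarrow> nat) \<Rightarrow> bool" where
  "sorted_order L h \<sigma> \<longleftrightarrow> bij_betw \<sigma> {1..L} {1..L} \<and>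
     (\<forall>i j. 1 \<le> i \<longrightarrow> i \<le> j \<longrightarrow> j \<le> L \<longrightarrow> h (\<sigma> j) \<le> h (\<sigma> i))"

definition imbalance :: "nat \<Rightarrow> (nat \<Rightarrow> int) \<Rightarrow> int" where
  "imbalance L h = (let \<sigma> = (SOME \<sigma>. sorted_order L h \<sigma>); \<tau> = \<sigma>(L + 1 := 0) in
     (\<Sum>i = 1..L. \<Sum>j = i + 1..L + 1. h (\<tau> i) - h (\<tau> j)))"

definition MB_property :: "nat \<Rightarrow> nat \<Rightarrow> (nat \<Rightarrow> nat) \<Rightarrow> (nat \<Rightarrow> nat \<Rightarrow> bool) \<Rightarrow> (nat \<Rightarrow> int) \<Rightarrow> bool" where
  "MB_property L K x g y \<longleftrightarrow>
     (\<forall>y'. feasible_withdrawal L K x g y' \<longrightarrow>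
        imbalance L (updated x y) \<le> imbalance L (updated x y'))"

definition interchange :: "nat \<Rightarrow> nat \<Rightarrow> nat \<Rightarrow> int" where
  "interchange f t i = (if i = f then 1 else if i = t then -1 else 0)"

end

theory Submission imports Defs begin

text \<open>Because the dummy queue 0 has the smallest updated size, the ordering in the imbalance index
  is a genuine sorting of all queues 0..L, so twice the index is the sum of the absolute differences
  of updated sizes over all ordered pairs of queues. If the interchange moves a unit from f to t
  with \<open>x\<^sub>t \<le> x\<^sub>f - 2\<close>, no pair involving a third queue gets worse, while the pair (f,t) itself
  improves by 2 in each order; so the interchanged withdrawal vector has a strictly smaller index.\<close>

lemma double_sum_upper_pairs:
  fixes F :: "nat \<Rightarrow> nat \<Rightarrow> int"
  assumes sym: "\<And>i j. F i j = F j i" and diag: "\<And>i. F i i = 0"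
  shows "2 * (\<Sum>i = 1..N. \<Sum>j = i+1..N+1. F i j) = (\<Sum>i = 1..N+1. \<Sum>j = 1..N+1. F i j)"
proof (induction N)
  case 0
  then show ?case by (simp add: diag)
next
  case (Suc N)
  have upper: "(\<Sum>i = 1..Suc N. \<Sum>j = i+1..Suc N + 1. F i j)
      = (\<Sum>i = 1..N. \<Sum>j = i+1..N+1. F i j) + (\<Sum>i = 1..N+1. F i (N+2))"
  proof -
    have "(\<Sum>i = 1..Suc N. \<Sum>j = i+1..Suc N + 1. F i j)
        = (\<Sum>i = 1..Suc N. F i (N+2) + (\<Sum>j = i+1..N + 1. F i j))"
    proof (rule sum.cong)
      fix i assume "i \<in> {1..Suc N}"
      then have "{i+1..Suc N + 1} = insert (N+2) {i+1..N+1}" by auto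
      then show "(\<Sum>j = i+1..Suc N + 1. F i j) = F i (N+2) + (\<Sum>j = i+1..N + 1. F i j)" by simp
    qed simp
    then show ?thesis by (simp add: sum.distrib)
  qed
  have "{1..Suc N + 1} = insert (N+2) {1..N+1}" by auto
  then have full: "(\<Sum>i = 1..Suc N + 1. \<Sum>j = 1..Suc N + 1. F i j)
      = (\<Sum>i = 1..N + 1. \<Sum>j = 1..N + 1. F i j) + (\<Sum>i = 1..N+1. F i (N+2)) + (\<Sum>j = 1..N+1. F (N+2) j)"
    by (simp add: sum.distrib diag)
  have "(\<Sum>j = 1..N+1. F (N+2) j) = (\<Sum>i = 1..N+1. F i (N+2))" using sym by simp
  then show ?case unfolding upper full using Suc by simp
qed

lemma sorted_order_exists: "\<exists>\<sigma>. sorted_order L h \<sigma>"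
proof -
  define xs where "xs = sort_key (\<lambda>i. - h i) [1..<L+1]"
  have d: "distinct xs" and st: "set xs = {1..L}" and len: "length xs = L"
    and so: "sorted (map (\<lambda>i. - h i) xs)"
    unfolding xs_def by (auto simp: length_sort)
  have "bij_betw ((!) xs) {..<L} {1..L}" using bij_betw_nth[OF d] len st by auto
  moreover have "bij_betw (\<lambda>i. i - 1) {1..L} {..<L}"
    by (rule bij_betw_byWitness[where f'="\<lambda>i. i+1"]) auto
  ultimately have bij: "bij_betw (\<lambda>i. xs ! (i - 1)) {1..L} {1..L}"
    using bij_betw_trans by (fastforce simp: comp_def)
  have "h (xs ! (j-1)) \<le> h (xs ! (i-1))" if "1 \<le> i" "i \<le> j" "j \<le> L" for i j
    using sorted_nth_mono[OF so, of "i-1" "j-1"] that len by auto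
  then show ?thesis unfolding sorted_order_def using bij by blast
qed

lemma double_imbalance_eq_sum_abs_diff:
  assumes dummy_min: "\<forall>i\<in>{1..L}. h 0 \<le> h i"
  shows "2 * imbalance L h = (\<Sum>a\<in>{0..L}. \<Sum>b\<in>{0..L}. \<bar>h a - h b\<bar>)"
proof -
  define \<sigma> where "\<sigma> = (SOME \<sigma>. sorted_order L h \<sigma>)"
  have "sorted_order L h \<sigma>" unfolding \<sigma>_def using sorted_order_exists someI_ex by metis
  then have bij: "bij_betw \<sigma> {1..L} {1..L}"
    and mono: "\<And>i j. 1 \<le> i \<Longrightarrow> i \<le> j \<Longrightarrow> j \<le> L \<Longrightarrow> h (\<sigma> j) \<le> h (\<sigma> i)"
    unfolding sorted_order_def by auto
  define \<tau> where "\<tau> = \<sigma>(L + 1 := 0)"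
  have reindex: "(\<Sum>i = 1..L+1. G (\<tau> i)) = (\<Sum>a\<in>{0..L}. G a)" for G :: "nat \<Rightarrow> int"
  proof -
    have "(\<Sum>i = 1..L. G (\<tau> i)) = (\<Sum>i = 1..L. G (\<sigma> i))" by (auto simp: \<tau>_def)
    also have "\<dots> = (\<Sum>a = 1..L. G a)" using sum.reindex_bij_betw[OF bij, of G] .
    finally have "(\<Sum>i = 1..L. G (\<tau> i)) = (\<Sum>a = 1..L. G a)" .
    moreover have "{1..L+1} = insert (L+1) {1..L}" "{0..L} = insert 0 {1..L}" by auto
    ultimately show ?thesis by (simp add: \<tau>_def)
  qed
  have "imbalance L h = (\<Sum>i = 1..L. \<Sum>j = i + 1..L + 1. h (\<tau> i) - h (\<tau> j))"
    unfolding imbalance_def Let_def \<sigma>_def[symmetric] \<tau>_def by simp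
  also have "\<dots> = (\<Sum>i = 1..L. \<Sum>j = i + 1..L + 1. \<bar>h (\<tau> i) - h (\<tau> j)\<bar>)"
  proof (intro sum.cong refl)
    fix i j assume i: "i \<in> {1..L}" and j: "j \<in> {i+1..L+1}"
    have "h (\<tau> j) \<le> h (\<tau> i)"
    proof (cases "j = L+1")
      case True
      have "\<sigma> i \<in> {1..L}" using bij i bij_betwE by blast
      then show ?thesis using True i dummy_min by (auto simp: \<tau>_def)
    next
      case False
      then show ?thesis using i j mono[of i j] by (auto simp: \<tau>_def)
    qed
    then show "h (\<tau> i) - h (\<tau> j) = \<bar>h (\<tau> i) - h (\<tau> j)\<bar>" by simp
  qed
  finally have "2 * imbalance L h = (\<Sum>i = 1..L+1. \<Sum>j = 1..L+1. \<bar>h (\<tau> i) - h (\<tau> j)\<bar>)"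
    using double_sum_upper_pairs[of "\<lambda>i j. \<bar>h (\<tau> i) - h (\<tau> j)\<bar>" L]
    by (simp add: abs_minus_commute)
  also have "\<dots> = (\<Sum>i = 1..L+1. \<Sum>b\<in>{0..L}. \<bar>h (\<tau> i) - h b\<bar>)"
    by (rule sum.cong[OF refl]) (rule reindex)
  also have "\<dots> = (\<Sum>a\<in>{0..L}. \<Sum>b\<in>{0..L}. \<bar>h a - h b\<bar>)"
    by (rule reindex)
  finally show ?thesis .
qed

lemma sum_sum_split_two:
  fixes G :: "'a \<Rightarrow> 'a \<Rightarrow> int"
  assumes "finite A" "f \<in> A" "t \<in> A" "f \<noteq> t"
  shows "(\<Sum>a\<in>A. \<Sum>b\<in>A. G a b) = G f f + G f t + G t f + G t t
     + (\<Sum>b\<in>A-{f,t}. G f b + G t b) + (\<Sum>a\<in>A-{f,t}. G a f + G a t)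
     + (\<Sum>a\<in>A-{f,t}. \<Sum>b\<in>A-{f,t}. G a b)"
proof -
  have A: "A = insert f (insert t (A - {f,t}))" using assms by auto
  have split: "(\<Sum>a\<in>A. H a) = H f + H t + (\<Sum>a\<in>A-{f,t}. H a)" for H :: "'a \<Rightarrow> int"
    by (subst A) (use assms in auto)
  show ?thesis by (simp add: split sum.distrib)
qed

lemma sum_abs_diff_transfer_less:
  fixes h h' :: "'a \<Rightarrow> int"
  assumes "finite A" "f \<in> A" "t \<in> A" "f \<noteq> t"
    and gap: "h t \<le> h f - 2"
    and hf: "h' f = h f - 1" and ht: "h' t = h t + 1"
    and rest: "\<And>b. b \<in> A - {f,t} \<Longrightarrow> h' b = h b"
  shows "(\<Sum>a\<in>A. \<Sum>b\<in>A. \<bar>h' a - h' b\<bar>) < (\<Sum>a\<in>A. \<Sum>b\<in>A. \<bar>h a - h b\<bar>)"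
proof -
  define R where "R = A - {f,t}"
  note split = sum_sum_split_two[OF assms(1-4), folded R_def]
  have row: "(\<Sum>b\<in>R. \<bar>h' f - h' b\<bar> + \<bar>h' t - h' b\<bar>) \<le> (\<Sum>b\<in>R. \<bar>h f - h b\<bar> + \<bar>h t - h b\<bar>)"
    by (rule sum_mono) (use gap in \<open>auto simp: hf ht rest R_def\<close>)
  have col: "(\<Sum>b\<in>R. \<bar>h' b - h' f\<bar> + \<bar>h' b - h' t\<bar>) \<le> (\<Sum>b\<in>R. \<bar>h b - h f\<bar> + \<bar>h b - h t\<bar>)"
    by (rule sum_mono) (use gap in \<open>auto simp: hf ht rest R_def\<close>)
  have inner: "(\<Sum>a\<in>R. \<Sum>b\<in>R. \<bar>h' a - h' b\<bar>) = (\<Sum>a\<in>R. \<Sum>b\<in>R. \<bar>h a - h b\<bar>)"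
    by (simp add: rest R_def)
  show ?thesis
    unfolding split[of "\<lambda>a b. \<bar>h' a - h' b\<bar>"] split[of "\<lambda>a b. \<bar>h a - h b\<bar>"]
    using row col inner gap hf ht by simp
qed

lemma feasible_withdrawal_bounds:
  assumes "feasible_withdrawal L K x g y"
  shows "\<forall>i\<le>L. 0 \<le> y i" and "\<forall>i\<in>{1..L}. y i \<le> int (x i)"
  using assms unfolding feasible_withdrawal_def feasible_control_def withdrawal_def by auto

lemma updated_dummy_le:
  assumes "feasible_withdrawal L K x g y" "x 0 = 0"
  shows "\<forall>i\<in>{1..L}. updated x y 0 \<le> updated x y i"
  using feasible_withdrawal_bounds[OF assms(1)] assms(2) unfolding updated_def by force

theorem mainTheorem11:
  fixes L K f t :: nat and x :: "nat \<Rightarrow> nat" and g :: "nat \<Rightarrow> nat \<Rightarrow> bool" and y :: "nat \<Rightarrow> int"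
  assumes "x 0 = 0"
    and "\<forall>j<K. g 0 j"
    and "feasible_withdrawal L K x g y"
    and "f \<le> L" and "t \<le> L" and "f \<noteq> t"
    and "feasible_withdrawal L K x g (\<lambda>i. y i + interchange f t i)"
    and "updated x y t \<le> updated x y f - 2"
  shows "\<not> MB_property L K x g y"
proof
  assume mb: "MB_property L K x g y"
  define y' where "y' = (\<lambda>i. y i + interchange f t i)"
  have feasible': "feasible_withdrawal L K x g y'" using assms(7) unfolding y'_def .
  have "imbalance L (updated x y) \<le> imbalance L (updated x y')"
    using mb feasible' unfolding MB_property_def by blast
  moreover have "(\<Sum>a\<in>{0..L}. \<Sum>b\<in>{0..L}. \<bar>updated x y' a - updated x y' b\<bar>)
      < (\<Sum>a\<in>{0..L}. \<Sum>b\<in>{0..L}. \<bar>updated x y a - updated x y b\<bar>)"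
    by (rule sum_abs_diff_transfer_less)
      (use assms(4-6,8) in \<open>auto simp: y'_def updated_def interchange_def\<close>)
  ultimately show False
    using double_imbalance_eq_sum_abs_diff[OF updated_dummy_le[OF assms(3,1)]]
      double_imbalance_eq_sum_abs_diff[OF updated_dummy_le[OF feasible' assms(1)]]
    by linarith
qed

end
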